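(* Let $\Pi(x)=\mathbf{T}x$ be a linear CG map, where $\mathbf{T}\in\mathbb{R}^{3M\times3N}$ consists of $3\times3$ blocks $\mathbf{T}_{ij}=\zeta_{ij}\mathbf{I}_3$ ($i=1,\dots,M$, $j=1,\dots,N$, $\zeta_{ij}\in\mathbb{R}$) and has rank $3M$. Let $\mathbf{W}\in\mathbb{R}^{3M\times3N}$ be any constant matrix such that $\mathbf{W}\mathbf{T}^t$ is invertible, and set $h_W(x)=(\mathbf{W}\mathbf{T}^t)^{-1}\mathbf{W}f(x)$. Then (under integrability $h_W\in L^1(\mu)$) $F^{\mathrm{PMF}}(z)=\mathbb{E}_\mu[h_W\mid\Pi=z]$ for all $z\in\mathbb{R}^{3M}$. In particular, with $\mathbf{W}=\mathbf{T}$, $h(x)=(\mathbf{T}\mathbf{T}^t)^{-1}\mathbf{T}f(x)$ satisfies $F^{\mathrm{PMF}}(z)=\mathbb{E}_\mu[h\mid\Pi=z]$.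
   Context: Standing setting: $\beta>0$; $U:\mathbb{R}^{3N}\to\mathbb{R}$ smooth with $Z=\int e^{-\beta U}dx<\infty$; $\mu(dx)=Z^{-1}e^{-\beta U}dx$; $f=-\nabla_xU\in\mathbb{R}^{3N}$ with components $f_j=-\nabla_{x_j}U\in\mathbb{R}^3$, $x=(x_1,\dots,x_N)$, $x_j\in\mathbb{R}^3$. $\bar\mu$ is the Lebesgue density of $\Pi_{\#}\mu$, assumed positive and $C^1$; $\bar U^{\mathrm{PMF}}(z)=-\beta^{-1}\log\bar\mu(z)-\beta^{-1}\log Z$; $F^{\mathrm{PMF}}=-\nabla_z\bar U^{\mathrm{PMF}}$; $\mathbb{E}_\mu[\cdot\mid\Pi=z]$ is conditional expectation given $\Pi=z$. *)

theory Defs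
  imports "HOL-Analysis.Analysis" "HOL-Probability.Probability"
begin

fun iter_dderiv :: "('a::real_normed_vector \<Rightarrow> real) \<Rightarrow> 'a list \<Rightarrow> 'a \<Rightarrow> real" where
  "iter_dderiv f [] = f"
| "iter_dderiv f (v # vs) = (\<lambda>x. frechet_derivative (iter_dderiv f vs) (at x) v)"

definition smooth_fun :: "('a::real_normed_vector \<Rightarrow> real) \<Rightarrow> bool" where
  "smooth_fun f \<longleftrightarrow> (\<forall>vs x. iter_dderiv f vs differentiable (at x))"

definition grad :: "('a::real_inner \<Rightarrow> real) \<Rightarrow> 'a \<Rightarrow> 'a" where
  "grad g x = (THE D. GDERIV g x :> D)"

definition C1_fun :: "('a::real_inner \<Rightarrow> real) \<Rightarrow> bool" where
  "C1_fun g \<longleftrightarrow> (\<forall>x. g differentiable (at x)) \<and> continuous_on UNIV (grad g)"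

definition partition_fn :: "real \<Rightarrow> ('a::euclidean_space \<Rightarrow> real) \<Rightarrow> real" where
  "partition_fn \<beta> U = (\<integral>x. exp (- \<beta> * U x) \<partial>lborel)"

definition gibbs :: "real \<Rightarrow> ('a::euclidean_space \<Rightarrow> real) \<Rightarrow> 'a measure" where
  "gibbs \<beta> U = density lborel (\<lambda>x. ennreal (exp (- \<beta> * U x) / partition_fn \<beta> U))"

definition force :: "('a::euclidean_space \<Rightarrow> real) \<Rightarrow> 'a \<Rightarrow> 'a" where
  "force U x = - grad U x"

definition U_PMF :: "real \<Rightarrow> real \<Rightarrow> ('b::euclidean_space \<Rightarrow> real) \<Rightarrow> 'b \<Rightarrow> real" where
  "U_PMF \<beta> Z mubar z = - (1/\<beta>) * ln (mubar z) - (1/\<beta>) * ln Z"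

definition F_PMF :: "real \<Rightarrow> real \<Rightarrow> ('b::euclidean_space \<Rightarrow> real) \<Rightarrow> 'b \<Rightarrow> 'b" where
  "F_PMF \<beta> Z mubar z = - grad (U_PMF \<beta> Z mubar) z"

text \<open>Linear CG matrix with 3x3 blocks T_ij = zeta_ij I_3; coordinates of R^{3N} are
  indexed by pairs (particle j, spatial coordinate b).\<close>
definition block_cg :: "real^'n^'m \<Rightarrow> real^('n \<times> 3)^('m \<times> 3)" where
  "block_cg \<zeta> = (\<chi> p. \<chi> q. if snd p = snd q then \<zeta> $ fst p $ fst q else 0)"

text \<open>g is (a version of) the conditional expectation z |-> E_M[h | P = z]:
  g is Borel, g o P is integrable and for every Borel set A,
  the integral of h over {P in A} equals that of g(P).\<close>
definition cond_exp_given ::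
  "'a measure \<Rightarrow> ('a \<Rightarrow> 'b::euclidean_space) \<Rightarrow> ('a \<Rightarrow> 'c::euclidean_space) \<Rightarrow> ('b \<Rightarrow> 'c) \<Rightarrow> bool" where
  "cond_exp_given M P h g \<longleftrightarrow>
     g \<in> borel_measurable borel \<and> integrable M (\<lambda>x. g (P x)) \<and>
     (\<forall>A \<in> sets borel. (\<integral>x. indicator (P -` A) x *\<^sub>R h x \<partial>M)
                      = (\<integral>x. indicator (P -` A) x *\<^sub>R g (P x) \<partial>M))"

end

theory Submission
  imports Defs
begin

text \<open>
  Let \<open>q\<close> be the Gibbs density and \<open>m\<close> the Lebesgue density of its pushforward under a linear
  map \<open>L\<close>. If \<open>L v = b\<close>, translating \<open>x\<close> by \<open>s v\<close> translates \<open>L x\<close> by \<open>s b\<close>, so for every Borel set \<open>A\<close>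
  the increments \<open>m z - m (z - s b)\<close> integrated over \<open>A\<close> and \<open>q x - q (x - s v)\<close> integrated over
  \<open>{x. L x \<in> A}\<close> agree. Dividing by \<open>s\<close> and letting \<open>s \<rightarrow> 0\<close> turns this into
  \<open>\<integral>\<^sub>A \<partial>\<^sub>b m = \<integral>\<^bsub>{L \<in> A}\<^esub> \<partial>\<^sub>v q = \<beta> \<integral>\<^bsub>{L \<in> A}\<^esub> q (v \<bullet> f)\<close>. The limit is first taken on half-open boxes,
  where the difference quotients of \<open>m\<close> are dominated and averages of indicators along lines
  converge pointwise, and then extended to all Borel sets by a Dynkin argument. Since
  \<open>F\<^sup>P\<^sup>M\<^sup>F = \<nabla>m / (\<beta> m)\<close>, this says that \<open>F\<^sup>P\<^sup>M\<^sup>F \<bullet> b\<close> is the conditional expectation of \<open>v \<bullet> f\<close> given \<open>L\<close>.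
  For \<open>L = T\<close> and \<open>G = (W T\<^sup>t)\<^sup>-\<^sup>1 W\<close> one has \<open>T G\<^sup>t = I\<close> and \<open>h\<^sub>W \<bullet> b = G\<^sup>t b \<bullet> f\<close>, so the columns of
  \<open>G\<^sup>t\<close> are such directions \<open>v\<close>; full row rank makes \<open>T T\<^sup>t\<close> invertible, covering \<open>W = T\<close>.
\<close>

lemma lborel_integral_translate:
  fixes f :: "'a::euclidean_space \<Rightarrow> 'b::{banach, second_countable_topology}"
  assumes [measurable]: "f \<in> borel_measurable borel"
  shows "(\<integral>x. f (c + x) \<partial>lborel) = (\<integral>x. f x \<partial>lborel)"
proof -
  have "(\<integral>x. f (c + x) \<partial>lborel) = integral\<^sup>L (distr lborel borel ((+) c)) f"
    by (rule integral_distr[symmetric]) auto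
  then show ?thesis by (simp add: lborel_distr_plus)
qed

lemma lborel_integrable_translate:
  fixes f :: "'a::euclidean_space \<Rightarrow> 'b::{banach, second_countable_topology}"
  assumes [measurable]: "f \<in> borel_measurable borel"
  shows "integrable lborel (\<lambda>x. f (c + x)) \<longleftrightarrow> integrable lborel f"
proof -
  have "integrable lborel (\<lambda>x. f (c + x)) \<longleftrightarrow> integrable (distr lborel borel ((+) c)) f"
    by (rule integrable_distr_eq[symmetric]) auto
  then show ?thesis by (simp add: lborel_distr_plus)
qed

lemma integrable_translate:
  fixes f :: "'a::euclidean_space \<Rightarrow> 'b::{banach, second_countable_topology}"
  assumes "integrable lborel f"
  shows "integrable lborel (\<lambda>x. f (c + x))"
  using assms lborel_integrable_translate[of f c] by auto

section \<open>Half-open boxes\<close>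

text \<open>Half-open boxes make \<open>t \<mapsto> indicator B (y + t *\<^sub>R e)\<close> right-continuous at \<open>0\<close> for
  every \<open>y\<close> and every basis vector \<open>e\<close>, so that averages over \<open>[0, s]\<close> converge pointwise.\<close>

definition half_open_box :: "('b::euclidean_space \<Rightarrow> real) \<Rightarrow> ('b \<Rightarrow> real) \<Rightarrow> 'b set" where
  "half_open_box a b = {z. \<forall>i\<in>Basis. a i \<le> z \<bullet> i \<and> z \<bullet> i < b i}"

definition half_open_boxes :: "'b::euclidean_space set set" where
  "half_open_boxes = range (\<lambda>(a, b). half_open_box a b)"

lemma sets_half_open_box [measurable]: "half_open_box a b \<in> sets borel"
proof -
  have "half_open_box a b = (\<Inter>i\<in>Basis. {z. a i \<le> z \<bullet> i} \<inter> {z. z \<bullet> i < b i})"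
    by (auto simp: half_open_box_def)
  also have "\<dots> \<in> sets borel" by (intro sets.finite_INT) auto
  finally show ?thesis .
qed

lemma bounded_half_open_box: "bounded (half_open_box a b)"
proof -
  have "norm z \<le> (\<Sum>i\<in>Basis. \<bar>a i\<bar> + \<bar>b i\<bar>)" if "z \<in> half_open_box a b" for z
  proof -
    have "norm z \<le> (\<Sum>i\<in>Basis. \<bar>z \<bullet> i\<bar>)" by (rule norm_le_l1)
    also have "\<dots> \<le> (\<Sum>i\<in>Basis. \<bar>a i\<bar> + \<bar>b i\<bar>)"
      using that by (intro sum_mono) (auto simp: half_open_box_def)
    finally show ?thesis .
  qed
  then show ?thesis by (auto simp: bounded_iff)
qed

lemma integrable_indicator_half_open_box_mult:
  fixes d :: "'b::euclidean_space \<Rightarrow> real"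
  assumes d: "continuous_on UNIV d"
  shows "integrable lborel (\<lambda>z. indicator (half_open_box a b) z * d z)"
proof (rule Bochner_Integration.integrable_bound)
  let ?K = "closure (half_open_box a b)"
  have "compact ?K" using bounded_half_open_box by simp
  then show "integrable lborel (\<lambda>z. indicator ?K z * d z)"
    using borel_integrable_compact[of ?K d] continuous_on_subset[OF d] by simp
  show "(\<lambda>z. indicator (half_open_box a b) z * d z) \<in> borel_measurable lborel"
    using borel_measurable_continuous_onI[OF d] by measurable
  show "AE z in lborel. norm (indicator (half_open_box a b) z * d z) \<le> norm (indicator ?K z * d z)"
    using closure_subset[of "half_open_box a b"] by (intro AE_I2) (auto simp: indicator_def)
qed

lemma half_open_box_Int:
  "half_open_box a b \<inter> half_open_box a' b' = half_open_box (\<lambda>i. max (a i) (a' i)) (\<lambda>i. min (b i) (b' i))"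
  by (auto simp: half_open_box_def)

lemma Int_stable_half_open_boxes: "Int_stable half_open_boxes"
  unfolding Int_stable_def half_open_boxes_def by (auto simp: half_open_box_Int)

lemma box_in_sigma_half_open_boxes:
  fixes a b :: "'b::euclidean_space"
  shows "box a b \<in> sigma_sets UNIV half_open_boxes"
proof -
  let ?B = "\<lambda>n. half_open_box (\<lambda>i. a \<bullet> i + 1 / real (Suc n)) (\<lambda>i. b \<bullet> i)"
  have "box a b = (\<Union>n. ?B n)"
  proof (intro equalityI subsetI)
    fix z assume z: "z \<in> box a b"
    let ?\<delta> = "Min ((\<lambda>i. z \<bullet> i - a \<bullet> i) ` Basis)"
    have "?\<delta> > 0" using z by (subst Min_gr_iff) (auto simp: mem_box)
    then obtain n where n: "1 / real (Suc n) < ?\<delta>" by (metis nat_approx_posE)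
    have "1 / real (Suc n) < z \<bullet> i - a \<bullet> i" if "i \<in> Basis" for i
      using n Min_le[of "(\<lambda>i. z \<bullet> i - a \<bullet> i) ` Basis" "z \<bullet> i - a \<bullet> i"] that by force
    then have "z \<in> ?B n" using z by (force simp: half_open_box_def mem_box)
    then show "z \<in> (\<Union>n. ?B n)" by blast
  next
    fix z assume "z \<in> (\<Union>n. ?B n)"
    then obtain n where "z \<in> ?B n" by blast
    moreover have "0 < 1 / real (Suc n)" by simp
    ultimately show "z \<in> box a b"
      unfolding mem_box half_open_box_def by (smt (verit) mem_Collect_eq)
  qed
  then show ?thesis
    by (simp only:) (intro sigma_sets.Union, auto simp: half_open_boxes_def)
qed

lemma sets_borel_subset_sigma_half_open_boxes:
  "sets (borel :: 'b::euclidean_space measure) \<subseteq> sigma_sets UNIV half_open_boxes"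
proof -
  have "sets (borel :: 'b measure) = sigma_sets UNIV (range (\<lambda>(a, b). box a b :: 'b set))"
    by (subst borel_eq_box) (simp add: sets_measure_of)
  also have "\<dots> \<subseteq> sigma_sets UNIV half_open_boxes"
    by (rule sigma_sets_mono) (auto intro: box_in_sigma_half_open_boxes)
  finally show ?thesis .
qed

lemma half_open_box_right_stable:
  fixes y e :: "'b::euclidean_space"
  assumes e: "e \<in> Basis"
  obtains \<delta> where "\<delta> > 0"
    and "\<And>t. 0 \<le> t \<Longrightarrow> t < \<delta> \<Longrightarrow> y + t *\<^sub>R e \<in> half_open_box a b \<longleftrightarrow> y \<in> half_open_box a b"
proof -
  have coord: "(y + t *\<^sub>R e) \<bullet> i = y \<bullet> i + (if i = e then t else 0)" if "i \<in> Basis" for i t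
    using that e by (auto simp: inner_add_left inner_Basis)
  show ?thesis
  proof (cases "y \<in> half_open_box a b")
    case True
    then have "b e - y \<bullet> e > 0" using e by (auto simp: half_open_box_def)
    then show ?thesis
      using True by (intro that[of "b e - y \<bullet> e"]) (auto simp: half_open_box_def coord)
  next
    case False
    then obtain i where i: "i \<in> Basis" "\<not> (a i \<le> y \<bullet> i \<and> y \<bullet> i < b i)"
      by (auto simp: half_open_box_def)
    show ?thesis
    proof (cases "i = e \<and> y \<bullet> i < a i")
      case True
      then have "a e - y \<bullet> e > 0" by auto
      then show ?thesis using True i False
        by (intro that[of "a e - y \<bullet> e"]) (auto simp: half_open_box_def coord)
    next
      case False2: False
      have "y + t *\<^sub>R e \<notin> half_open_box a b" if "0 \<le> t" for t
      proof
        assume "y + t *\<^sub>R e \<in> half_open_box a b"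
        then have "a i \<le> (y + t *\<^sub>R e) \<bullet> i \<and> (y + t *\<^sub>R e) \<bullet> i < b i"
          using i by (auto simp: half_open_box_def)
        then show False using i False2 that coord[OF i(1), of t] by (auto split: if_splits)
      qed
      then show ?thesis using False by (intro that[of 1]) auto
    qed
  qed
qed

definition half_open_cube :: "nat \<Rightarrow> 'b::euclidean_space set" where
  "half_open_cube N = half_open_box (\<lambda>_. - real N) (\<lambda>_. real N)"

lemma sets_half_open_cube [measurable]: "half_open_cube N \<in> sets borel"
  by (simp add: half_open_cube_def)

lemma half_open_cube_in_half_open_boxes: "half_open_cube N \<in> half_open_boxes"
  by (auto simp: half_open_cube_def half_open_boxes_def)

lemma half_open_cube_mono: "N \<le> N' \<Longrightarrow> half_open_cube N \<subseteq> half_open_cube N'"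
  by (force simp: half_open_cube_def half_open_box_def)

lemma eventually_in_half_open_cube: "\<forall>\<^sub>F N in sequentially. z \<in> half_open_cube N"
proof -
  obtain N0 :: nat where N0: "norm z < real N0" using reals_Archimedean2 by blast
  have "z \<in> half_open_cube N" if "N0 \<le> N" for N
  proof -
    have "norm z < real N" using N0 that by (meson less_le_trans of_nat_le_iff)
    moreover have "\<bar>z \<bullet> i\<bar> \<le> norm z" if "i \<in> Basis" for i using Basis_le_norm[OF that] by simp
    ultimately show ?thesis by (force simp: half_open_cube_def half_open_box_def abs_le_iff)
  qed
  then show ?thesis by (auto simp: eventually_sequentially)
qed

section \<open>Difference quotients and averages along lines\<close>

lemma integral_indicator_segment_le:
  fixes y e :: "'b::euclidean_space"
  assumes s: "s \<ge> 0" and [measurable]: "B \<in> sets borel"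
  shows "\<bar>\<integral>t. indicator {0..s} t * indicator B (y + t *\<^sub>R e) \<partial>lborel\<bar> \<le> s"
proof -
  have ii: "integrable lborel (indicat_real {0..s})"
    using s by (intro integrable_real_indicator) auto
  have "\<bar>\<integral>t. indicator {0..s} t * indicator B (y + t *\<^sub>R e) \<partial>lborel\<bar>
      \<le> (\<integral>t. (indicator {0..s} t :: real) \<partial>lborel)"
  proof (rule Bochner_Integration.integral_abs_bound_integral[OF _ ii])
    show "integrable lborel (\<lambda>t. indicator {0..s} t * indicator B (y + t *\<^sub>R e) :: real)"
      by (rule Bochner_Integration.integrable_bound[OF ii]) (auto simp: indicator_def)
  qed (auto simp: indicator_def)
  also have "\<dots> = s" using s by simp
  finally show ?thesis .
qed

lemma tendsto_average_indicator_half_open_box: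
  fixes y e :: "'b::euclidean_space"
  assumes e: "e \<in> Basis" and s_pos: "\<And>n. s n > 0" and s_lim: "s \<longlonglongrightarrow> 0"
  shows "(\<lambda>n. (\<integral>t. indicator {0..s n} t * indicator (half_open_box a b) (y + t *\<^sub>R e) \<partial>lborel) / s n)
           \<longlonglongrightarrow> indicator (half_open_box a b) y"
proof (rule tendsto_eventually)
  let ?B = "half_open_box a b"
  obtain \<delta> where "\<delta> > 0" and \<delta>: "\<And>t. 0 \<le> t \<Longrightarrow> t < \<delta> \<Longrightarrow> y + t *\<^sub>R e \<in> ?B \<longleftrightarrow> y \<in> ?B"
    using half_open_box_right_stable[OF e] by blast
  have "\<forall>\<^sub>F n in sequentially. s n < \<delta>"
    using order_tendstoD(2)[OF s_lim \<open>\<delta> > 0\<close>] .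
  then show "\<forall>\<^sub>F n in sequentially.
      (\<integral>t. indicator {0..s n} t * indicator ?B (y + t *\<^sub>R e) \<partial>lborel) / s n = indicator ?B y"
  proof eventually_elim
    case (elim n)
    have "(\<integral>t. indicator {0..s n} t * indicator ?B (y + t *\<^sub>R e) \<partial>lborel)
        = (\<integral>t. indicator {0..s n} t * (indicator ?B y :: real) \<partial>lborel)"
      using \<delta> elim by (intro Bochner_Integration.integral_cong) (auto simp: indicator_def)
    also have "\<dots> = s n * indicator ?B y"
      using s_pos[of n] by simp
    finally show ?case using s_pos[of n] by simp
  qed
qed

lemma tendsto_backward_difference_quotient:
  fixes g :: "real \<Rightarrow> real"
  assumes "(g has_real_derivative D) (at 0)"
    and s_pos: "\<And>n. 0 < s n" and s_lim: "s \<longlonglongrightarrow> 0"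
  shows "(\<lambda>n. (g 0 - g (- s n)) / s n) \<longlonglongrightarrow> D"
proof -
  have "((\<lambda>h. (g (0 + h) - g 0) / h) \<longlongrightarrow> D) (at 0)"
    using assms(1) by (simp add: DERIV_def)
  moreover have "filterlim (\<lambda>n. - s n) (at 0) sequentially"
    using tendsto_minus[OF s_lim] s_pos by (intro filterlim_atI) (auto simp: less_imp_neq[symmetric])
  ultimately have "(\<lambda>n. (g (0 + - s n) - g 0) / (- s n)) \<longlonglongrightarrow> D"
    by (rule filterlim_compose)
  then show ?thesis by (simp add: minus_divide_left)
qed

lemma abs_backward_difference_quotient_le:
  fixes g :: "real \<Rightarrow> real"
  assumes "\<And>t. (g has_real_derivative g' t) (at t)" and "s > 0"
    and "\<And>t. - s < t \<Longrightarrow> t < 0 \<Longrightarrow> \<bar>g' t\<bar> \<le> M"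
  shows "\<bar>(g 0 - g (- s)) / s\<bar> \<le> M"
proof -
  obtain \<xi> where "- s < \<xi>" "\<xi> < 0" "g 0 - g (- s) = s * g' \<xi>"
    using MVT2[of "- s" 0 g g'] assms(1,2) by auto
  then show ?thesis using assms(2,3) by (simp add: abs_mult)
qed

lemma tendsto_integral_difference_quotient:
  fixes m d :: "'b::euclidean_space \<Rightarrow> real" and e :: 'b
  assumes B: "bounded B" "B \<in> sets borel"
    and m_deriv: "\<And>z t. ((\<lambda>t. m (z + t *\<^sub>R e)) has_real_derivative d (z + t *\<^sub>R e)) (at t)"
    and d: "continuous_on UNIV d" and m: "continuous_on UNIV m"
    and s_pos: "\<And>n. 0 < s n" and s_le: "\<And>n. s n \<le> 1" and s_lim: "s \<longlonglongrightarrow> 0"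
  shows "(\<lambda>n. \<integral>z. indicator B z * ((m z - m (z - s n *\<^sub>R e)) / s n) \<partial>lborel)
          \<longlonglongrightarrow> (\<integral>z. indicator B z * d z \<partial>lborel)"
proof -
  obtain r where r: "\<And>z. z \<in> B \<Longrightarrow> norm z \<le> r" using B(1) by (auto simp: bounded_iff)
  let ?K = "cball (0::'b) (r + norm e)"
  have "compact (d ` ?K)"
    by (intro compact_continuous_image continuous_on_subset[OF d]) auto
  then obtain M where M: "\<And>y. y \<in> ?K \<Longrightarrow> \<bar>d y\<bar> \<le> M"
    using compact_imp_bounded by (force simp: bounded_iff)
  have [measurable]: "d \<in> borel_measurable borel" "m \<in> borel_measurable borel" "B \<in> sets borel"
    using d m B(2) by (auto intro: borel_measurable_continuous_onI)
  show ?thesis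
  proof (rule integral_dominated_convergence[where w="\<lambda>z. indicator B z * M"])
    have "emeasure lborel B < \<infinity>" by (rule emeasure_bounded_finite[OF B(1)])
    then show "integrable lborel (\<lambda>z. indicator B z * M)"
      by (intro integrable_mult_left integrable_real_indicator) (auto simp: top_unique)
    show "AE z in lborel. (\<lambda>n. indicator B z * ((m z - m (z - s n *\<^sub>R e)) / s n))
            \<longlonglongrightarrow> indicator B z * d z"
      using tendsto_backward_difference_quotient[OF m_deriv[of _ 0] s_pos s_lim]
      by (intro AE_I2 tendsto_mult_left) simp
    show "AE z in lborel. norm (indicator B z * ((m z - m (z - s n *\<^sub>R e)) / s n)) \<le> indicator B z * M" for n
    proof (rule AE_I2, cases)
      fix z assume z: "z \<in> B"
      have "\<bar>d (z + t *\<^sub>R e)\<bar> \<le> M" if "- s n < t" "t < 0" for t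
      proof (rule M)
        have "norm (z + t *\<^sub>R e) \<le> norm z + \<bar>t\<bar> * norm e"
          by (metis norm_scaleR norm_triangle_ineq)
        also have "\<dots> \<le> r + 1 * norm e"
          using r[OF z] that s_le[of n] by (intro add_mono mult_right_mono) auto
        finally show "z + t *\<^sub>R e \<in> ?K" by simp
      qed
      from abs_backward_difference_quotient_le[OF m_deriv[of z] s_pos this]
      show "norm (indicator B z * ((m z - m (z - s n *\<^sub>R e)) / s n)) \<le> indicator B z * M"
        using z by simp
    qed simp
  qed measurable
qed

lemma integrable_segment_times_translate:
  fixes w :: "'a::euclidean_space \<Rightarrow> real" and g :: "real \<times> 'a \<Rightarrow> real"
  assumes w: "integrable lborel w" and [measurable]: "g \<in> borel_measurable (lborel \<Otimes>\<^sub>M lborel)"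
    and g_le: "\<And>p. \<bar>g p\<bar> \<le> 1" and s: "s \<ge> 0"
  shows "integrable (lborel \<Otimes>\<^sub>M lborel) (\<lambda>(t, x). indicator {0..s} t * (g (t, x) * w (x - t *\<^sub>R v)))"
proof -
  have [measurable]: "w \<in> borel_measurable borel" using borel_measurable_integrable[OF w] by simp
  define F where "F = (\<lambda>(t, x). indicator {0..s} t * (g (t, x) * w (x - t *\<^sub>R v)))"
  have [measurable]: "F \<in> borel_measurable (lborel \<Otimes>\<^sub>M lborel)" unfolding F_def by measurable
  have w_translate: "integrable lborel (\<lambda>x. w (x - t *\<^sub>R v))" for t
    using integrable_translate[OF w, of "- t *\<^sub>R v"] by simp
  have slice: "integrable lborel (\<lambda>x. F (t, x))" for t
    by (rule Bochner_Integration.integrable_bound[OF w_translate[of t]])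
      (use g_le in \<open>auto simp: F_def indicator_def abs_mult intro!: mult_left_le_one_le\<close>)
  have "integrable lborel (\<lambda>t. \<integral>x. norm (F (t, x)) \<partial>lborel)"
  proof (rule Bochner_Integration.integrable_bound)
    show "integrable lborel (\<lambda>t. indicator {0..s} t * (\<integral>x. norm (w x) \<partial>lborel))"
      using s by (intro integrable_mult_left integrable_real_indicator) auto
    show "AE t in lborel. norm (\<integral>x. norm (F (t, x)) \<partial>lborel)
        \<le> norm (indicator {0..s} t * (\<integral>x. norm (w x) \<partial>lborel))"
    proof (rule AE_I2)
      fix t
      have "(\<integral>x. norm (F (t, x)) \<partial>lborel) \<le> (\<integral>x. indicator {0..s} t * norm (w (x - t *\<^sub>R v)) \<partial>lborel)"
        using g_le integrable_norm[OF slice[of t]] integrable_norm[OF w_translate[of t]]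
        by (intro Bochner_Integration.integral_mono)
          (auto simp: F_def indicator_def abs_mult intro!: mult_left_le_one_le)
      also have "\<dots> = indicator {0..s} t * (\<integral>x. norm (w x) \<partial>lborel)"
        using lborel_integral_translate[of "\<lambda>x. norm (w x)" "- t *\<^sub>R v"] by simp
      finally show "norm (\<integral>x. norm (F (t, x)) \<partial>lborel) \<le> norm (indicator {0..s} t * (\<integral>x. norm (w x) \<partial>lborel))"
        by (simp add: integral_nonneg_AE)
    qed
  qed measurable
  then have "integrable (lborel \<Otimes>\<^sub>M lborel) F"
    using slice by (intro lborel_pair.Fubini_integrable) auto
  then show ?thesis by (simp add: F_def)
qed

lemma integral_segment_derivative_along_line:
  fixes q w :: "'a::real_normed_vector \<Rightarrow> real"
  assumes q_deriv: "\<And>t. ((\<lambda>t. q (x - t *\<^sub>R v)) has_real_derivative w (x - t *\<^sub>R v)) (at t)"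
    and w: "continuous_on UNIV w" and s: "s \<ge> 0"
  shows "(\<integral>t. indicator {0..s} t * w (x - t *\<^sub>R v) \<partial>lborel) = q (x - s *\<^sub>R v) - q x"
proof -
  have "(\<integral>t. indicator {0..s} t *\<^sub>R w (x - t *\<^sub>R v) \<partial>lborel) = q (x - s *\<^sub>R v) - q (x - 0 *\<^sub>R v)"
  proof (rule integral_FTC_atLeastAtMost[OF s])
    show "((\<lambda>t. q (x - t *\<^sub>R v)) has_vector_derivative w (x - t *\<^sub>R v)) (at t within {0..s})" for t
      using q_deriv[of t]
      by (simp add: has_real_derivative_iff_has_vector_derivative has_vector_derivative_at_within)
    show "continuous_on {0..s} (\<lambda>t. w (x - t *\<^sub>R v))"
      by (intro continuous_on_compose2[OF w] continuous_intros) auto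
  qed
  then show ?thesis by simp
qed

text \<open>The fundamental theorem of calculus along \<open>v\<close>, followed by Fubini and the translation
  \<open>x \<mapsto> x + t *\<^sub>R v\<close>, which moves \<open>L x\<close> to \<open>L x + t *\<^sub>R e\<close>.\<close>

lemma integral_indicator_linear_increment:
  fixes L :: "'a::euclidean_space \<Rightarrow> 'b::euclidean_space" and q w :: "'a \<Rightarrow> real"
  assumes L: "linear L" and Lv: "L v = e" and B[measurable]: "B \<in> sets borel"
    and q_deriv: "\<And>x t. ((\<lambda>t. q (x - t *\<^sub>R v)) has_real_derivative w (x - t *\<^sub>R v)) (at t)"
    and w: "continuous_on UNIV w" "integrable lborel w" and q: "continuous_on UNIV q"
    and s: "s \<ge> 0"
  shows "(\<integral>x. indicator B (L x) * (q x - q (x - s *\<^sub>R v)) \<partial>lborel)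
       = - (\<integral>x. w x * (\<integral>t. indicator {0..s} t * indicator B (L x + t *\<^sub>R e) \<partial>lborel) \<partial>lborel)"
proof -
  have [measurable]: "L \<in> borel_measurable borel"
    using L by (intro borel_measurable_continuous_onI linear_continuous_on linear_conv_bounded_linear[THEN iffD1])
  have [measurable]: "w \<in> borel_measurable borel" "q \<in> borel_measurable borel"
    using w q by (auto intro: borel_measurable_continuous_onI)
  have FTC: "(\<integral>t. indicator {0..s} t * w (x - t *\<^sub>R v) \<partial>lborel) = q (x - s *\<^sub>R v) - q x" for x
    by (rule integral_segment_derivative_along_line[OF q_deriv w(1) s])
  define F1 where "F1 = (\<lambda>(t, x). indicator {0..s} t * (indicator B (L x) * w (x - t *\<^sub>R v)))"
  define F2 where "F2 = (\<lambda>(t, x). indicator {0..s} t * (indicator B (L x + t *\<^sub>R e) * w (x - t *\<^sub>R 0)))"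
  have F1: "integrable (lborel \<Otimes>\<^sub>M lborel) F1"
    unfolding F1_def using s w(2)
    by (intro integrable_segment_times_translate[where g="\<lambda>(t, x). indicator B (L x)", simplified])
      (auto simp: indicator_def)
  have F2: "integrable (lborel \<Otimes>\<^sub>M lborel) F2"
    unfolding F2_def using s w(2)
    by (intro integrable_segment_times_translate[where g="\<lambda>(t, x). indicator B (L x + t *\<^sub>R e)", simplified])
      (auto simp: indicator_def)
  have "indicator B (L x) * (q x - q (x - s *\<^sub>R v)) = - (\<integral>t. F1 (t, x) \<partial>lborel)" for x
    by (simp add: F1_def mult.left_commute FTC algebra_simps)
  then have "(\<integral>x. indicator B (L x) * (q x - q (x - s *\<^sub>R v)) \<partial>lborel) = - (\<integral>x. \<integral>t. F1 (t, x) \<partial>lborel \<partial>lborel)"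
    by simp
  also have "(\<integral>x. \<integral>t. F1 (t, x) \<partial>lborel \<partial>lborel) = (\<integral>t. \<integral>x. F1 (t, x) \<partial>lborel \<partial>lborel)"
    using lborel_pair.Fubini_integral[of "\<lambda>t x. F1 (t, x)"] F1 by simp
  also have "\<dots> = (\<integral>t. \<integral>x. F2 (t, x) \<partial>lborel \<partial>lborel)"
  proof (rule Bochner_Integration.integral_cong[OF refl])
    fix t
    have "(\<integral>x. F1 (t, x) \<partial>lborel) = (\<integral>x. F1 (t, t *\<^sub>R v + x) \<partial>lborel)"
      by (rule lborel_integral_translate[symmetric]) (simp add: F1_def)
    also have "\<dots> = (\<integral>x. F2 (t, x) \<partial>lborel)"
      using L by (simp add: F1_def F2_def linear_add linear_scale Lv add.commute)
    finally show "(\<integral>x. F1 (t, x) \<partial>lborel) = (\<integral>x. F2 (t, x) \<partial>lborel)" .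
  qed
  also have "\<dots> = (\<integral>x. \<integral>t. F2 (t, x) \<partial>lborel \<partial>lborel)"
    using lborel_pair.Fubini_integral[of "\<lambda>t x. F2 (t, x)"] F2 by simp
  also have "\<dots> = (\<integral>x. w x * (\<integral>t. indicator {0..s} t * indicator B (L x + t *\<^sub>R e) \<partial>lborel) \<partial>lborel)"
    by (simp add: F2_def mult.commute mult.left_commute)
  finally show ?thesis .
qed

lemma integral_indicator_increment_pushforward:
  fixes L :: "'a::euclidean_space \<Rightarrow> 'b::euclidean_space" and q :: "'a \<Rightarrow> real" and m :: "'b \<Rightarrow> real"
  assumes L: "linear L" and Lv: "L v = e" and B[measurable]: "B \<in> sets borel"
    and q: "integrable lborel q" and m: "integrable lborel m"
    and push: "\<And>A. A \<in> sets borel \<Longrightarrow> (\<integral>x. indicator A (L x) * q x \<partial>lborel) = (\<integral>z. indicator A z * m z \<partial>lborel)"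
  shows "(\<integral>z. indicator B z * (m z - m (z - s *\<^sub>R e)) \<partial>lborel)
       = (\<integral>x. indicator B (L x) * (q x - q (x - s *\<^sub>R v)) \<partial>lborel)"
proof -
  have [measurable]: "L \<in> borel_measurable borel"
    using L by (intro borel_measurable_continuous_onI linear_continuous_on linear_conv_bounded_linear[THEN iffD1])
  have [measurable]: "q \<in> borel_measurable borel" "m \<in> borel_measurable borel"
    using borel_measurable_integrable[OF q] borel_measurable_integrable[OF m] by auto
  have "(\<integral>z. indicator B z * m (z - s *\<^sub>R e) \<partial>lborel) = (\<integral>z. indicator B (s *\<^sub>R e + z) * m z \<partial>lborel)"
    using lborel_integral_translate[of "\<lambda>z. indicator B (s *\<^sub>R e + z) * m z" "- s *\<^sub>R e"] by simp
  also have "\<dots> = (\<integral>z. indicator ((\<lambda>z. s *\<^sub>R e + z) -` B) z * m z \<partial>lborel)"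
    by (simp add: indicator_def)
  also have "\<dots> = (\<integral>x. indicator ((\<lambda>z. s *\<^sub>R e + z) -` B) (L x) * q x \<partial>lborel)"
    by (rule push[symmetric], rule measurable_sets_borel[OF _ B]) simp
  also have "\<dots> = (\<integral>x. indicator B (L (s *\<^sub>R v + x)) * q x \<partial>lborel)"
    using L by (simp add: indicator_def linear_add linear_scale Lv)
  also have "\<dots> = (\<integral>x. indicator B (L x) * q (x - s *\<^sub>R v) \<partial>lborel)"
    using lborel_integral_translate[of "\<lambda>x. indicator B (L x) * q (x - s *\<^sub>R v)" "s *\<^sub>R v"] by simp
  finally have translated: "(\<integral>z. indicator B z * m (z - s *\<^sub>R e) \<partial>lborel)
      = (\<integral>x. indicator B (L x) * q (x - s *\<^sub>R v) \<partial>lborel)" .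
  have indicator_mult: "integrable lborel (\<lambda>x. indicator B (g x) * f x)"
    if "integrable lborel f" "g \<in> borel_measurable borel" for f :: "'c::euclidean_space \<Rightarrow> real" and g
  proof (rule Bochner_Integration.integrable_bound[OF that(1)])
    have [measurable]: "f \<in> borel_measurable borel" "g \<in> borel_measurable borel"
      using borel_measurable_integrable[OF that(1)] that(2) by auto
    show "(\<lambda>x. indicator B (g x) * f x) \<in> borel_measurable lborel" by measurable
  qed (auto simp: indicator_def)
  have "integrable lborel (\<lambda>z. indicator B z * m z)" "integrable lborel (\<lambda>x. indicator B (L x) * q x)"
    "integrable lborel (\<lambda>z. indicator B z * m (z - s *\<^sub>R e))"
    "integrable lborel (\<lambda>x. indicator B (L x) * q (x - s *\<^sub>R v))"
    using integrable_translate[OF m, of "- s *\<^sub>R e"] integrable_translate[OF q, of "- s *\<^sub>R v"]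
    by (auto intro!: indicator_mult q m)
  then show ?thesis
    using push[OF B] translated by (simp add: right_diff_distrib)
qed

lemma tendsto_integral_average_indicator_half_open_box:
  fixes w :: "'a \<Rightarrow> real" and P :: "'a \<Rightarrow> 'b::euclidean_space"
  assumes w: "integrable M w" and [measurable]: "P \<in> measurable M borel"
    and e: "e \<in> Basis" and s_pos: "\<And>n. s n > 0" and s_lim: "s \<longlonglongrightarrow> 0"
  shows "(\<lambda>n. \<integral>x. w x * ((\<integral>t. indicator {0..s n} t * indicator (half_open_box a b) (P x + t *\<^sub>R e) \<partial>lborel) / s n) \<partial>M)
           \<longlonglongrightarrow> (\<integral>x. w x * indicator (half_open_box a b) (P x) \<partial>M)"
proof (rule integral_dominated_convergence[where w="\<lambda>x. norm (w x)"])
  let ?avg = "\<lambda>n x. (\<integral>t. indicator {0..s n} t * indicator (half_open_box a b) (P x + t *\<^sub>R e) \<partial>lborel) / s n"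
  have [measurable]: "w \<in> borel_measurable M" using w by auto
  show "(\<lambda>x. w x * ?avg n x) \<in> borel_measurable M" for n by measurable
  show "AE x in M. (\<lambda>n. w x * ?avg n x) \<longlonglongrightarrow> w x * indicator (half_open_box a b) (P x)"
    by (intro AE_I2 tendsto_mult_left tendsto_average_indicator_half_open_box e s_pos s_lim)
  show "AE x in M. norm (w x * ?avg n x) \<le> norm (w x)" for n
  proof (rule AE_I2)
    fix x
    have "\<bar>?avg n x\<bar> \<le> 1"
      using integral_indicator_segment_le[OF less_imp_le[OF s_pos] sets_half_open_box] s_pos[of n]
      by (simp add: divide_le_eq_1)
    then show "norm (w x * ?avg n x) \<le> norm (w x)"
      unfolding real_norm_def abs_mult by (rule mult_left_le) simp_all
  qed
qed (use w in auto)

lemma integral_half_open_box_directional_derivative: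
  fixes L :: "'a::euclidean_space \<Rightarrow> 'b::euclidean_space" and q w :: "'a \<Rightarrow> real"
    and m d :: "'b \<Rightarrow> real"
  assumes L: "linear L" and Lv: "L v = e" and e: "e \<in> Basis"
    and q_deriv: "\<And>x t. ((\<lambda>t. q (x - t *\<^sub>R v)) has_real_derivative w (x - t *\<^sub>R v)) (at t)"
    and w: "continuous_on UNIV w" "integrable lborel w"
    and q: "continuous_on UNIV q" "integrable lborel q"
    and m_deriv: "\<And>z t. ((\<lambda>t. m (z + t *\<^sub>R e)) has_real_derivative d (z + t *\<^sub>R e)) (at t)"
    and d: "continuous_on UNIV d" and m: "continuous_on UNIV m" "integrable lborel m"
    and push: "\<And>A. A \<in> sets borel \<Longrightarrow> (\<integral>x. indicator A (L x) * q x \<partial>lborel) = (\<integral>z. indicator A z * m z \<partial>lborel)"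
  shows "(\<integral>z. indicator (half_open_box a b) z * d z \<partial>lborel)
       = - (\<integral>x. indicator (half_open_box a b) (L x) * w x \<partial>lborel)"
proof -
  define s where "s n = 1 / real (Suc n)" for n
  let ?B = "half_open_box a b"
  let ?avg = "\<lambda>n x. (\<integral>t. indicator {0..s n} t * indicator ?B (L x + t *\<^sub>R e) \<partial>lborel) / s n"
  have s_pos: "s n > 0" and s_le: "s n \<le> 1" for n by (auto simp: s_def)
  have s_lim: "s \<longlonglongrightarrow> 0"
    unfolding s_def using LIMSEQ_Suc[OF lim_inverse_n'] by (simp add: divide_inverse)
  have [measurable]: "L \<in> borel_measurable borel"
    using L by (intro borel_measurable_continuous_onI linear_continuous_on linear_conv_bounded_linear[THEN iffD1])
  have quotient: "(\<integral>z. indicator ?B z * ((m z - m (z - s n *\<^sub>R e)) / s n) \<partial>lborel)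
      = - (\<integral>x. w x * ?avg n x \<partial>lborel)" for n
  proof -
    have "(\<integral>z. indicator ?B z * ((m z - m (z - s n *\<^sub>R e)) / s n) \<partial>lborel)
        = (\<integral>z. indicator ?B z * (m z - m (z - s n *\<^sub>R e)) \<partial>lborel) / s n"
      by simp
    also have "\<dots> = - (\<integral>x. w x * (\<integral>t. indicator {0..s n} t * indicator ?B (L x + t *\<^sub>R e) \<partial>lborel) \<partial>lborel) / s n"
      using integral_indicator_increment_pushforward[OF L Lv sets_half_open_box q(2) m(2) push]
        integral_indicator_linear_increment[OF L Lv sets_half_open_box q_deriv w q(1)] s_pos[of n]
      by (simp add: less_imp_le)
    also have "\<dots> = - (\<integral>x. w x * ?avg n x \<partial>lborel)"
      by simp
    finally show ?thesis .
  qed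
  have lim_m: "(\<lambda>n. \<integral>z. indicator ?B z * ((m z - m (z - s n *\<^sub>R e)) / s n) \<partial>lborel)
      \<longlonglongrightarrow> (\<integral>z. indicator ?B z * d z \<partial>lborel)"
    by (rule tendsto_integral_difference_quotient[OF bounded_half_open_box sets_half_open_box
          m_deriv d m(1) s_pos s_le s_lim])
  have lim_w: "(\<lambda>n. \<integral>x. w x * ?avg n x \<partial>lborel) \<longlonglongrightarrow> (\<integral>x. w x * indicator ?B (L x) \<partial>lborel)"
    using w(2) by (rule tendsto_integral_average_indicator_half_open_box) (use e s_pos s_lim in auto)
  have "(\<integral>z. indicator ?B z * d z \<partial>lborel) = - (\<integral>x. w x * indicator ?B (L x) \<partial>lborel)"
    using lim_m tendsto_minus[OF lim_w] unfolding quotient by (rule LIMSEQ_unique)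
  then show ?thesis by (simp add: mult.commute)
qed

section \<open>From half-open boxes to Borel sets\<close>

lemma sums_integral_indicator_comp:
  fixes f :: "'a \<Rightarrow> real" and g :: "'a \<Rightarrow> 'b::topological_space"
  assumes f: "integrable M f" and [measurable]: "g \<in> measurable M borel"
    and [measurable]: "\<And>i. A i \<in> sets borel" and disj: "disjoint_family A"
  shows "(\<lambda>i. \<integral>x. indicator (A i) (g x) * f x \<partial>M) sums (\<integral>x. indicator (\<Union>i. A i) (g x) * f x \<partial>M)"
proof -
  have [measurable]: "f \<in> borel_measurable M" using f by auto
  have indicator_mult: "integrable M (\<lambda>x. indicator S (g x) * f x)" if [measurable]: "S \<in> sets borel" for S
    by (rule Bochner_Integration.integrable_bound[OF f]) (auto simp: indicator_def)
  have partial: "(\<Sum>i<n. \<integral>x. indicator (A i) (g x) * f x \<partial>M) = (\<integral>x. indicator (\<Union>i<n. A i) (g x) * f x \<partial>M)" for n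
  proof -
    have "indicator (\<Union>i<n. A i) y = (\<Sum>i<n. indicator (A i) y :: real)" for y
      using disj by (intro indicator_UN_disjoint) (auto simp: disjoint_family_on_def)
    then have "(\<integral>x. indicator (\<Union>i<n. A i) (g x) * f x \<partial>M) = (\<integral>x. (\<Sum>i<n. indicator (A i) (g x) * f x) \<partial>M)"
      by (simp only: sum_distrib_right)
    also have "\<dots> = (\<Sum>i<n. \<integral>x. indicator (A i) (g x) * f x \<partial>M)"
      by (rule Bochner_Integration.integral_sum) (rule indicator_mult, simp)
    finally show ?thesis ..
  qed
  have "(\<lambda>n. \<integral>x. indicator (\<Union>i<n. A i) (g x) * f x \<partial>M) \<longlonglongrightarrow> (\<integral>x. indicator (\<Union>i. A i) (g x) * f x \<partial>M)"
  proof (rule integral_dominated_convergence[where w="\<lambda>x. norm (f x)"])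
    show "AE x in M. (\<lambda>n. indicator (\<Union>i<n. A i) (g x) * f x) \<longlonglongrightarrow> indicator (\<Union>i. A i) (g x) * f x"
      by (intro AE_I2 tendsto_mult_right LIMSEQ_indicator_UN)
  qed (use f in \<open>auto simp: indicator_def\<close>)
  then show ?thesis unfolding sums_def partial .
qed

lemma integral_indicator_comp_eq_on_sigma_sets:
  fixes f1 :: "'a \<Rightarrow> real" and f2 :: "'c \<Rightarrow> real" and g1 :: "'a \<Rightarrow> 'b::topological_space" and g2 :: "'c \<Rightarrow> 'b"
  assumes f1: "integrable M1 f1" and f2: "integrable M2 f2"
    and [measurable]: "g1 \<in> measurable M1 borel" "g2 \<in> measurable M2 borel"
    and G: "Int_stable G" "G \<subseteq> sets borel"
    and eq_UNIV: "(\<integral>x. f1 x \<partial>M1) = (\<integral>x. f2 x \<partial>M2)"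
    and eq_G: "\<And>B. B \<in> G \<Longrightarrow> (\<integral>x. indicator B (g1 x) * f1 x \<partial>M1) = (\<integral>x. indicator B (g2 x) * f2 x \<partial>M2)"
    and A: "A \<in> sigma_sets UNIV G"
  shows "(\<integral>x. indicator A (g1 x) * f1 x \<partial>M1) = (\<integral>x. indicator A (g2 x) * f2 x \<partial>M2)"
proof -
  have sigma_G: "sigma_sets UNIV G \<subseteq> sets borel"
    using sets.sigma_sets_subset[of G borel] G(2) by simp
  have split_compl: "(\<integral>x. indicator (UNIV - S) (g x) * f x \<partial>M)
      = (\<integral>x. f x \<partial>M) - (\<integral>x. indicator S (g x) * f x \<partial>M)"
    if f: "integrable M f" and [measurable]: "g \<in> measurable M borel" "S \<in> sets borel"
    for f :: "'d \<Rightarrow> real" and g :: "'d \<Rightarrow> 'b" and M S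
  proof -
    have "integrable M (\<lambda>x. indicator S (g x) * f x)"
      by (rule Bochner_Integration.integrable_bound[OF f]) (use f in \<open>auto simp: indicator_def\<close>)
    moreover have "indicator (UNIV - S) (g x) * f x = f x - indicator S (g x) * f x" for x
      by (simp add: indicator_def)
    ultimately show ?thesis using f by simp
  qed
  have "G \<subseteq> Pow UNIV" by simp
  from G(1) this A show ?thesis
  proof (induction rule: sigma_sets_induct_disjoint)
    case (basic B)
    then show ?case by (rule eq_G)
  next
    case (compl S)
    then have [measurable]: "S \<in> sets borel" using sigma_G by blast
    show ?case
      using compl(2) eq_UNIV by (simp add: split_compl[OF f1] split_compl[OF f2])
  next
    case (union A)
    have [measurable]: "A i \<in> sets borel" for i using union(2) sigma_G by blast
    show ?case
      using sums_integral_indicator_comp[OF f1, of g1 A] sums_integral_indicator_comp[OF f2, of g2 A]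
        union(1,3) by (simp add: sums_unique2)
  qed simp_all
qed

lemma tendsto_integral_indicator_half_open_cube:
  fixes f :: "'a \<Rightarrow> real" and g :: "'a \<Rightarrow> 'b::euclidean_space"
  assumes f: "integrable M f" and [measurable]: "g \<in> measurable M borel" "A \<in> sets borel"
  shows "(\<lambda>N. \<integral>x. indicator (A \<inter> half_open_cube N) (g x) * f x \<partial>M) \<longlonglongrightarrow> (\<integral>x. indicator A (g x) * f x \<partial>M)"
proof (rule integral_dominated_convergence[where w="\<lambda>x. norm (f x)"])
  show "(\<lambda>x. indicator (A \<inter> half_open_cube N) (g x) * f x) \<in> borel_measurable M" for N
    using f by measurable
  show "AE x in M. (\<lambda>N. indicator (A \<inter> half_open_cube N) (g x) * f x) \<longlonglongrightarrow> indicator A (g x) * f x"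
  proof (rule AE_I2, rule tendsto_eventually)
    fix x
    show "\<forall>\<^sub>F N in sequentially. indicator (A \<inter> half_open_cube N) (g x) * f x = indicator A (g x) * f x"
      using eventually_in_half_open_cube[of "g x"] by eventually_elim (simp add: indicator_def)
  qed
qed (use f in \<open>auto simp: indicator_def\<close>)

lemma integrable_if_bounded_on_half_open_cubes:
  fixes d :: "'b::euclidean_space \<Rightarrow> real"
  assumes d: "continuous_on UNIV d"
    and bound: "\<And>N. (\<integral>z. indicator (half_open_cube N) z * \<bar>d z\<bar> \<partial>lborel) \<le> C"
  shows "integrable lborel d"
proof -
  define f where "f N z = indicator (half_open_cube N) z * \<bar>d z\<bar>" for N z
  have f_integrable: "integrable lborel (f N)" for N
    unfolding f_def half_open_cube_def
    using d by (intro integrable_indicator_half_open_box_mult continuous_intros)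
  have f_mono: "f N z \<le> f (Suc N) z" for N z
    using half_open_cube_mono[of N "Suc N"] by (auto simp: f_def indicator_def)
  have "incseq (\<lambda>N. integral\<^sup>L lborel (f N))"
    unfolding incseq_Suc_iff by (intro allI Bochner_Integration.integral_mono f_integrable f_mono)
  then have integrals_converge: "(\<lambda>N. integral\<^sup>L lborel (f N)) \<longlonglongrightarrow> (SUP N. integral\<^sup>L lborel (f N))"
    using bound unfolding f_def[abs_def] by (intro LIMSEQ_incseq_SUP) (auto simp: bdd_above_def)
  have "integrable lborel (\<lambda>z. \<bar>d z\<bar>)"
  proof (rule integrable_monotone_convergence[OF f_integrable _ _ integrals_converge])
    show "AE z in lborel. mono (\<lambda>N. f N z)" by (intro AE_I2) (simp add: incseq_Suc_iff f_mono)
    show "AE z in lborel. (\<lambda>N. f N z) \<longlonglongrightarrow> \<bar>d z\<bar>"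
    proof (rule AE_I2, rule tendsto_eventually)
      fix z
      show "\<forall>\<^sub>F N in sequentially. f N z = \<bar>d z\<bar>"
        using eventually_in_half_open_cube[of z] by eventually_elim (simp add: f_def)
    qed
    show "(\<lambda>z. \<bar>d z\<bar>) \<in> borel_measurable lborel"
      using borel_measurable_continuous_onI[OF d] by measurable
  qed
  then show ?thesis
    using integrable_abs_iff[of d lborel] borel_measurable_continuous_onI[OF d] by simp
qed

lemma integral_indicator_inter_half_open_cube_eq:
  fixes d :: "'b::euclidean_space \<Rightarrow> real" and P :: "'a \<Rightarrow> 'b" and W :: "'a \<Rightarrow> real"
  assumes d: "continuous_on UNIV d" and [measurable]: "P \<in> measurable M borel"
    and W: "integrable M W"
    and eq_boxes: "\<And>a b. (\<integral>z. indicator (half_open_box a b) z * d z \<partial>lborel)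
                       = (\<integral>x. indicator (half_open_box a b) (P x) * W x \<partial>M)"
    and A: "A \<in> sets borel"
  shows "(\<integral>z. indicator (A \<inter> half_open_cube N) z * d z \<partial>lborel)
       = (\<integral>x. indicator (A \<inter> half_open_cube N) (P x) * W x \<partial>M)"
proof -
  let ?K = "half_open_cube N :: 'b set"
  have restrict: "indicator S y * (indicator ?K y * c) = indicator (S \<inter> ?K) y * (c :: real)" for S y c
    by (simp add: indicator_def)
  have cube_eq: "(\<integral>z. indicator (S \<inter> ?K) z * d z \<partial>lborel) = (\<integral>x. indicator (S \<inter> ?K) (P x) * W x \<partial>M)"
    if "S \<in> half_open_boxes" for S
  proof -
    have "S \<inter> ?K \<in> half_open_boxes"
      using that half_open_cube_in_half_open_boxes Int_stable_half_open_boxes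
      unfolding Int_stable_def by blast
    then show ?thesis using eq_boxes by (auto simp: half_open_boxes_def)
  qed
  have "(\<integral>z. indicator A z * (indicator ?K z * d z) \<partial>lborel)
      = (\<integral>x. indicator A (P x) * (indicator ?K (P x) * W x) \<partial>M)"
  proof (rule integral_indicator_comp_eq_on_sigma_sets[where G=half_open_boxes])
    show "integrable lborel (\<lambda>z. indicator ?K z * d z)"
      unfolding half_open_cube_def by (rule integrable_indicator_half_open_box_mult[OF d])
    show "integrable M (\<lambda>x. indicator ?K (P x) * W x)"
      using W by (intro Bochner_Integration.integrable_bound[OF W]) (auto simp: indicator_def)
    show "(\<integral>z. indicator ?K z * d z \<partial>lborel) = (\<integral>x. indicator ?K (P x) * W x \<partial>M)"
      using cube_eq[OF half_open_cube_in_half_open_boxes, of N] by simp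
    show "(\<integral>z. indicator S z * (indicator ?K z * d z) \<partial>lborel)
        = (\<integral>x. indicator S (P x) * (indicator ?K (P x) * W x) \<partial>M)" if "S \<in> half_open_boxes" for S
      unfolding restrict using cube_eq[OF that] .
    show "half_open_boxes \<subseteq> sets borel" by (auto simp: half_open_boxes_def)
    show "A \<in> sigma_sets UNIV half_open_boxes"
      using A sets_borel_subset_sigma_half_open_boxes by blast
  qed (simp_all add: Int_stable_half_open_boxes)
  then show ?thesis unfolding restrict .
qed

lemma integral_indicator_half_open_cube_abs_le:
  fixes d :: "'b::euclidean_space \<Rightarrow> real" and P :: "'a \<Rightarrow> 'b" and W :: "'a \<Rightarrow> real"
  assumes d: "continuous_on UNIV d" and [measurable]: "P \<in> measurable M borel"
    and W: "integrable M W"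
    and eq_cubes: "\<And>A N. A \<in> sets borel \<Longrightarrow> (\<integral>z. indicator (A \<inter> half_open_cube N) z * d z \<partial>lborel)
                       = (\<integral>x. indicator (A \<inter> half_open_cube N) (P x) * W x \<partial>M)"
  shows "(\<integral>z. indicator (half_open_cube N) z * \<bar>d z\<bar> \<partial>lborel) \<le> (\<integral>x. \<bar>W x\<bar> \<partial>M)"
proof -
  let ?K = "half_open_cube N :: 'b set"
  let ?pos = "{z. 0 \<le> d z} \<inter> ?K" and ?neg = "{z. d z < 0} \<inter> ?K"
  have [measurable]: "d \<in> borel_measurable borel" "W \<in> borel_measurable M"
    using d W by (auto intro: borel_measurable_continuous_onI)
  have cube: "integrable lborel (\<lambda>z. indicator ?K z * d z)"
    unfolding half_open_cube_def by (rule integrable_indicator_half_open_box_mult[OF d])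
  have integrable_restrict: "integrable lborel (\<lambda>z. indicator (S \<inter> ?K) z * d z)" if "S \<in> sets borel" for S
    using integrable_mult_indicator[OF _ cube, of S] that by (simp add: indicator_inter_arith mult.assoc)
  have integrable_comp: "integrable M (\<lambda>x. indicator S (P x) * W x)" if [measurable]: "S \<in> sets borel" for S
    by (rule Bochner_Integration.integrable_bound[OF W]) (auto simp: indicator_def)
  have "indicator ?K z * \<bar>d z\<bar> = indicator ?pos z * d z - indicator ?neg z * d z" for z
    by (simp add: indicator_def)
  then have "(\<integral>z. indicator ?K z * \<bar>d z\<bar> \<partial>lborel)
      = (\<integral>z. indicator ?pos z * d z \<partial>lborel) - (\<integral>z. indicator ?neg z * d z \<partial>lborel)"
    using integrable_restrict[of "{z. 0 \<le> d z}"] integrable_restrict[of "{z. d z < 0}"] by simp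
  also have "\<dots> = (\<integral>x. (indicator ?pos (P x) - indicator ?neg (P x)) * W x \<partial>M)"
    using eq_cubes[of "{z. 0 \<le> d z}" N] eq_cubes[of "{z. d z < 0}" N] integrable_comp[of ?pos]
      integrable_comp[of ?neg] by (simp add: left_diff_distrib)
  also have "\<dots> \<le> (\<integral>x. \<bar>W x\<bar> \<partial>M)"
    using integrable_comp[of ?pos] integrable_comp[of ?neg] W
    by (intro Bochner_Integration.integral_mono) (auto simp: indicator_def left_diff_distrib)
  finally show ?thesis .
qed

lemma integral_indicator_eq_on_sets_borel:
  fixes d :: "'b::euclidean_space \<Rightarrow> real" and P :: "'a \<Rightarrow> 'b" and W :: "'a \<Rightarrow> real"
  assumes d: "continuous_on UNIV d" and P [measurable]: "P \<in> measurable M borel"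
    and W: "integrable M W"
    and eq_boxes: "\<And>a b. (\<integral>z. indicator (half_open_box a b) z * d z \<partial>lborel)
                       = (\<integral>x. indicator (half_open_box a b) (P x) * W x \<partial>M)"
  shows "integrable lborel d"
    and "\<And>A. A \<in> sets borel \<Longrightarrow> (\<integral>z. indicator A z * d z \<partial>lborel) = (\<integral>x. indicator A (P x) * W x \<partial>M)"
proof -
  note eq_cubes = integral_indicator_inter_half_open_cube_eq[OF d P W eq_boxes]
  show d_integrable: "integrable lborel d"
    by (rule integrable_if_bounded_on_half_open_cubes[OF d
          integral_indicator_half_open_cube_abs_le[OF d P W eq_cubes]])
  fix A :: "'b set" assume [measurable]: "A \<in> sets borel"
  show "(\<integral>z. indicator A z * d z \<partial>lborel) = (\<integral>x. indicator A (P x) * W x \<partial>M)"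
    using tendsto_integral_indicator_half_open_cube[OF d_integrable, of "\<lambda>z. z" A]
      tendsto_integral_indicator_half_open_cube[OF W P, of A]
    unfolding eq_cubes[OF \<open>A \<in> sets borel\<close>] by (auto intro: LIMSEQ_unique)
qed

section \<open>Gradients\<close>

lemma GDERIV_unique:
  assumes "GDERIV f x :> D" and "GDERIV f x :> D'"
  shows "D = D'"
proof -
  have "(\<lambda>h. h \<bullet> D) = (\<lambda>h. h \<bullet> D')"
    using has_derivative_unique assms unfolding gderiv_def by blast
  then have "(D - D') \<bullet> D = (D - D') \<bullet> D'" by metis
  then have "(D - D') \<bullet> (D - D') = 0" by (simp add: inner_diff_right)
  then show ?thesis by simp
qed

lemma has_gradient_grad:
  fixes f :: "'a::euclidean_space \<Rightarrow> real"
  assumes "f differentiable (at x)"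
  shows "GDERIV f x :> grad f x"
proof -
  obtain f' where f': "(f has_derivative f') (at x)" using assms by (auto simp: differentiable_def)
  have lin: "linear f'" using f' by (rule has_derivative_linear)
  define D where "D = (\<Sum>i\<in>Basis. f' i *\<^sub>R i)"
  have "f' h = h \<bullet> D" for h
  proof -
    have "f' h = f' (\<Sum>i\<in>Basis. (h \<bullet> i) *\<^sub>R i)" by (simp add: euclidean_representation)
    also have "\<dots> = (\<Sum>i\<in>Basis. (h \<bullet> i) * f' i)"
      using lin by (simp add: linear_sum linear_scale)
    also have "\<dots> = h \<bullet> D" by (simp add: D_def inner_sum_right mult.commute)
    finally show ?thesis .
  qed
  then have D: "GDERIV f x :> D"
    unfolding gderiv_def using f' by (metis (no_types) ext)
  then have "grad f x = D"
    unfolding grad_def by (rule the_equality) (simp add: GDERIV_unique D)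
  then show ?thesis using D by simp
qed

lemma grad_eqI:
  fixes f :: "'a::euclidean_space \<Rightarrow> real"
  assumes "GDERIV f x :> D"
  shows "grad f x = D"
proof -
  have "f differentiable (at x)" using assms unfolding gderiv_def differentiable_def by blast
  then show ?thesis using GDERIV_unique[OF has_gradient_grad assms] by simp
qed

lemma smooth_fun_differentiable: "smooth_fun U \<Longrightarrow> U differentiable (at x)"
  unfolding smooth_fun_def by (metis iter_dderiv.simps(1))

lemma smooth_fun_continuous_on_grad:
  fixes U :: "'a::euclidean_space \<Rightarrow> real"
  assumes U: "smooth_fun U"
  shows "continuous_on UNIV (grad U)"
proof -
  have "grad U x \<bullet> i = iter_dderiv U [i] x" for x i
  proof -
    have "(\<lambda>h. h \<bullet> grad U x) = frechet_derivative U (at x)"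
      using has_gradient_grad[OF smooth_fun_differentiable[OF U]] unfolding gderiv_def
      by (rule frechet_derivative_at)
    then show ?thesis by (metis iter_dderiv.simps inner_commute)
  qed
  then have grad_eq: "grad U = (\<lambda>x. \<Sum>i\<in>Basis. iter_dderiv U [i] x *\<^sub>R i)"
    by (metis (no_types, lifting) euclidean_representation ext)
  have "continuous_on UNIV (iter_dderiv U [i])" for i
  proof -
    have "\<forall>x. iter_dderiv U [i] differentiable (at x)" using U unfolding smooth_fun_def by blast
    then show ?thesis
      by (intro continuous_at_imp_continuous_on ballI differentiable_imp_continuous_within) auto
  qed
  then show ?thesis unfolding grad_eq by (intro continuous_intros) auto
qed

lemma C1_fun_has_gradient: "C1_fun m \<Longrightarrow> GDERIV m z :> grad m z"
  for m :: "'a::euclidean_space \<Rightarrow> real"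
  using has_gradient_grad unfolding C1_fun_def by auto

lemma C1_fun_continuous_on: "C1_fun m \<Longrightarrow> continuous_on UNIV m"
  unfolding C1_fun_def
  by (intro continuous_at_imp_continuous_on ballI differentiable_imp_continuous_within) auto

lemma has_real_derivative_along_line:
  fixes f :: "'a::euclidean_space \<Rightarrow> real"
  assumes "\<And>y. GDERIV f y :> D y"
  shows "((\<lambda>t. f (z + t *\<^sub>R e)) has_real_derivative (D (z + t *\<^sub>R e) \<bullet> e)) (at t)"
proof -
  have "((\<lambda>t. z + t *\<^sub>R e) has_derivative (\<lambda>h. h *\<^sub>R e)) (at t)"
    by (auto intro!: derivative_eq_intros)
  from has_derivative_compose[OF this assms[of "z + t *\<^sub>R e", unfolded gderiv_def]]
  have "((\<lambda>t. f (z + t *\<^sub>R e)) has_derivative (\<lambda>h. (h *\<^sub>R e) \<bullet> D (z + t *\<^sub>R e))) (at t)" .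
  moreover have "(\<lambda>h. (h *\<^sub>R e) \<bullet> D (z + t *\<^sub>R e)) = (*) (D (z + t *\<^sub>R e) \<bullet> e)"
    by (auto simp: inner_commute)
  ultimately show ?thesis unfolding has_field_derivative_def by simp
qed

lemma F_PMF_eq:
  fixes m :: "'b::euclidean_space \<Rightarrow> real"
  assumes "C1_fun m" and "m z > 0"
  shows "F_PMF \<beta> Z m z = (1 / (\<beta> * m z)) *\<^sub>R grad m z"
proof -
  have "GDERIV (\<lambda>z. ln (m z)) z :> (1 / m z) *\<^sub>R grad m z"
    using GDERIV_DERIV_compose[OF C1_fun_has_gradient[OF assms(1)] DERIV_ln[OF assms(2)]]
    by (simp add: divide_inverse)
  from GDERIV_mult[OF GDERIV_const this, of "- (1/\<beta>)"]
  have "GDERIV (\<lambda>z. - (1/\<beta>) * ln (m z) - (1/\<beta>) * ln Z) z :> (- (1/\<beta>)) *\<^sub>R ((1 / m z) *\<^sub>R grad m z)"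
    using GDERIV_diff[OF _ GDERIV_const[of "(1/\<beta>) * ln Z" z]] by simp
  then have "grad (U_PMF \<beta> Z m) z = (- (1/\<beta>)) *\<^sub>R ((1 / m z) *\<^sub>R grad m z)"
    by (intro grad_eqI) (simp add: U_PMF_def[abs_def])
  then show ?thesis by (simp add: F_PMF_def)
qed

section \<open>The Gibbs measure under a linear coarse graining\<close>

definition gibbs_pdf :: "real \<Rightarrow> ('a::euclidean_space \<Rightarrow> real) \<Rightarrow> 'a \<Rightarrow> real" where
  "gibbs_pdf \<beta> U x = exp (- \<beta> * U x) / partition_fn \<beta> U"

lemma gibbs_eq_density: "gibbs \<beta> U = density lborel (\<lambda>x. ennreal (gibbs_pdf \<beta> U x))"
  by (simp add: gibbs_def gibbs_pdf_def)

lemma partition_fn_pos: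
  fixes U :: "'a::euclidean_space \<Rightarrow> real"
  assumes "integrable lborel (\<lambda>x. exp (- \<beta> * U x))"
  shows "partition_fn \<beta> U > 0"
proof -
  have nonneg: "AE x in lborel. 0 \<le> exp (- \<beta> * U x)" by simp
  have "partition_fn \<beta> U \<noteq> 0"
  proof
    assume "partition_fn \<beta> U = 0"
    then have "AE x in lborel. exp (- \<beta> * U x) = 0"
      using integral_nonneg_eq_0_iff_AE[OF assms nonneg] unfolding partition_fn_def by simp
    then have "AE x in (lborel :: 'a measure). False" by simp
    then have "ae_filter (lborel :: 'a measure) = bot" using trivial_limit_def by blast
    then show False by (simp add: ae_filter_eq_bot_iff)
  qed
  moreover have "partition_fn \<beta> U \<ge> 0"
    unfolding partition_fn_def by (rule integral_nonneg_AE[OF nonneg])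
  ultimately show ?thesis by simp
qed

locale linear_coarse_graining =
  fixes \<beta> :: real and U :: "'a::euclidean_space \<Rightarrow> real"
    and L :: "'a \<Rightarrow> 'b::euclidean_space" and m :: "'b \<Rightarrow> real"
  assumes beta_pos: "\<beta> > 0"
    and U_smooth: "smooth_fun U"
    and Z_finite: "integrable lborel (\<lambda>x. exp (- \<beta> * U x))"
    and L_linear: "linear L"
    and pushforward: "distr (gibbs \<beta> U) lborel L = density lborel (\<lambda>z. ennreal (m z))"
    and m_pos: "\<And>z. m z > 0"
    and m_C1: "C1_fun m"
begin

abbreviation pdf :: "'a \<Rightarrow> real" where
  "pdf \<equiv> gibbs_pdf \<beta> U"

lemma measurable_L [measurable]: "L \<in> borel_measurable borel"
  using L_linear
  by (intro borel_measurable_continuous_onI linear_continuous_on linear_conv_bounded_linear[THEN iffD1])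

lemma continuous_on_U: "continuous_on UNIV U"
  using smooth_fun_differentiable[OF U_smooth]
  by (intro continuous_at_imp_continuous_on ballI differentiable_imp_continuous_within) auto

lemma pdf_pos: "pdf x > 0"
  using partition_fn_pos[OF Z_finite] by (simp add: gibbs_pdf_def)

lemma continuous_on_pdf: "continuous_on UNIV pdf"
  unfolding gibbs_pdf_def[abs_def] using continuous_on_U partition_fn_pos[OF Z_finite]
  by (intro continuous_intros) auto

lemma integrable_pdf: "integrable lborel pdf"
  unfolding gibbs_pdf_def[abs_def] using Z_finite by simp

lemma measurable_pdf [measurable]: "pdf \<in> borel_measurable borel"
  using continuous_on_pdf by (rule borel_measurable_continuous_onI)

lemma measurable_m [measurable]: "m \<in> borel_measurable borel"
  using C1_fun_continuous_on[OF m_C1] by (rule borel_measurable_continuous_onI)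

lemma sets_gibbs [measurable_cong]: "sets (gibbs \<beta> U) = sets borel"
  by (simp add: gibbs_eq_density)

lemma integral_gibbs:
  fixes f :: "'a \<Rightarrow> 'c::{banach, second_countable_topology}"
  assumes "f \<in> borel_measurable borel"
  shows "integral\<^sup>L (gibbs \<beta> U) f = (\<integral>x. pdf x *\<^sub>R f x \<partial>lborel)"
  unfolding gibbs_eq_density using assms pdf_pos by (intro integral_density) (auto intro: less_imp_le)

lemma integrable_gibbs_iff:
  fixes f :: "'a \<Rightarrow> 'c::{banach, second_countable_topology}"
  assumes "f \<in> borel_measurable borel"
  shows "integrable (gibbs \<beta> U) f \<longleftrightarrow> integrable lborel (\<lambda>x. pdf x *\<^sub>R f x)"
  unfolding gibbs_eq_density using assms pdf_pos by (intro integrable_density) (auto intro: less_imp_le)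

lemma integral_pushforward:
  fixes f :: "'b \<Rightarrow> 'c::{banach, second_countable_topology}"
  assumes [measurable]: "f \<in> borel_measurable borel"
  shows "(\<integral>x. f (L x) \<partial>gibbs \<beta> U) = (\<integral>z. m z *\<^sub>R f z \<partial>lborel)"
proof -
  have "(\<integral>x. f (L x) \<partial>gibbs \<beta> U) = integral\<^sup>L (distr (gibbs \<beta> U) lborel L) f"
    by (rule integral_distr[symmetric]) auto
  also have "\<dots> = (\<integral>z. m z *\<^sub>R f z \<partial>lborel)"
    unfolding pushforward using m_pos by (intro integral_density) (auto intro: less_imp_le)
  finally show ?thesis .
qed

lemma integrable_pushforward_iff:
  fixes f :: "'b \<Rightarrow> 'c::{banach, second_countable_topology}"
  assumes [measurable]: "f \<in> borel_measurable borel"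
  shows "integrable (gibbs \<beta> U) (\<lambda>x. f (L x)) \<longleftrightarrow> integrable lborel (\<lambda>z. m z *\<^sub>R f z)"
proof -
  have "integrable (gibbs \<beta> U) (\<lambda>x. f (L x)) \<longleftrightarrow> integrable (distr (gibbs \<beta> U) lborel L) f"
    by (rule integrable_distr_eq[symmetric]) auto
  also have "\<dots> \<longleftrightarrow> integrable lborel (\<lambda>z. m z *\<^sub>R f z)"
    unfolding pushforward using m_pos by (intro integrable_density) (auto intro: less_imp_le)
  finally show ?thesis .
qed

lemma integrable_m: "integrable lborel m"
  using integrable_pushforward_iff[of "\<lambda>_. 1::real"] integrable_gibbs_iff[of "\<lambda>_. 1::real"]
    integrable_pdf by simp

lemma integral_indicator_pushforward:
  assumes [measurable]: "A \<in> sets borel"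
  shows "(\<integral>x. indicator A (L x) * pdf x \<partial>lborel) = (\<integral>z. indicator A z * m z \<partial>lborel)"
  using integral_gibbs[of "\<lambda>x. indicator A (L x) :: real"] integral_pushforward[of "indicator A :: _ \<Rightarrow> real"]
  by (simp add: mult.commute)

lemma has_real_derivative_pdf_along_line:
  "((\<lambda>t. pdf (x - t *\<^sub>R v)) has_real_derivative
     \<beta> * pdf (x - t *\<^sub>R v) * (grad U (x - t *\<^sub>R v) \<bullet> v)) (at t)"
proof -
  have "((\<lambda>t. U (x + t *\<^sub>R - v)) has_real_derivative (grad U (x + t *\<^sub>R - v) \<bullet> - v)) (at t)"
    by (rule has_real_derivative_along_line[OF has_gradient_grad[OF smooth_fun_differentiable[OF U_smooth]]])
  then have "((\<lambda>t. exp (- \<beta> * U (x - t *\<^sub>R v)) / partition_fn \<beta> U) has_real_derivative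
      exp (- \<beta> * U (x - t *\<^sub>R v)) * (- \<beta> * (grad U (x - t *\<^sub>R v) \<bullet> - v)) / partition_fn \<beta> U) (at t)"
    using partition_fn_pos[OF Z_finite] by (auto intro!: derivative_eq_intros)
  then show ?thesis by (simp add: gibbs_pdf_def[abs_def] algebra_simps)
qed

text \<open>As \<open>\<beta> * pdf x * (v \<bullet> force U x)\<close> is the derivative of \<open>pdf\<close> along \<open>v\<close>, this is the identity
  \<open>\<integral>\<^sub>A \<partial>\<^sub>b m = \<integral>\<^bsub>{L \<in> A}\<^esub> \<partial>\<^sub>v pdf\<close>.\<close>

lemma integral_indicator_grad_component:
  assumes b: "b \<in> Basis" and Lv: "L v = b"
    and integrable_force: "integrable lborel (\<lambda>x. pdf x * (v \<bullet> force U x))"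
  shows "integrable lborel (\<lambda>z. grad m z \<bullet> b)"
    and "\<And>A. A \<in> sets borel \<Longrightarrow> (\<integral>z. indicator A z * (grad m z \<bullet> b) \<partial>lborel)
            = \<beta> * (\<integral>x. indicator A (L x) * (pdf x * (v \<bullet> force U x)) \<partial>lborel)"
proof -
  define w where "w y = \<beta> * pdf y * (grad U y \<bullet> v)" for y
  have w_eq: "w x = - (\<beta> * (pdf x * (v \<bullet> force U x)))" for x
    by (simp add: w_def force_def inner_commute)
  have w_integrable: "integrable lborel w"
    unfolding w_eq using integrable_force by simp
  have w_continuous: "continuous_on UNIV w"
    unfolding w_def using continuous_on_pdf smooth_fun_continuous_on_grad[OF U_smooth]
    by (intro continuous_intros) auto
  have grad_m_continuous: "continuous_on UNIV (\<lambda>z. grad m z \<bullet> b)"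
    using m_C1 unfolding C1_fun_def by (intro continuous_intros) auto
  have pdf_deriv: "((\<lambda>t. pdf (x - t *\<^sub>R v)) has_real_derivative w (x - t *\<^sub>R v)) (at t)" for x t
    unfolding w_def by (rule has_real_derivative_pdf_along_line)
  have m_deriv: "((\<lambda>t. m (z + t *\<^sub>R b)) has_real_derivative (grad m (z + t *\<^sub>R b) \<bullet> b)) (at t)" for z t
    by (rule has_real_derivative_along_line[OF C1_fun_has_gradient[OF m_C1]])
  have "(\<integral>z. indicator (half_open_box a a') z * (grad m z \<bullet> b) \<partial>lborel)
      = (\<integral>x. indicator (half_open_box a a') (L x) * - w x \<partial>lborel)" for a a'
    using integral_half_open_box_directional_derivative[where d="\<lambda>z. grad m z \<bullet> b",
        OF L_linear Lv b pdf_deriv w_continuous w_integrable continuous_on_pdf integrable_pdf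
        m_deriv grad_m_continuous C1_fun_continuous_on[OF m_C1] integrable_m integral_indicator_pushforward]
    by simp
  from integral_indicator_eq_on_sets_borel[OF grad_m_continuous _ _ this]
  show "integrable lborel (\<lambda>z. grad m z \<bullet> b)"
    and "\<And>A. A \<in> sets borel \<Longrightarrow> (\<integral>z. indicator A z * (grad m z \<bullet> b) \<partial>lborel)
            = \<beta> * (\<integral>x. indicator A (L x) * (pdf x * (v \<bullet> force U x)) \<partial>lborel)"
    using w_integrable integrable_force by (auto simp: w_eq mult.left_commute)
qed

lemma m_scaleR_F_PMF: "m z *\<^sub>R F_PMF \<beta> Z m z = (1 / \<beta>) *\<^sub>R grad m z"
  using F_PMF_eq[OF m_C1 m_pos[of z]] m_pos[of z] by (simp add: field_simps)

lemma measurable_F_PMF [measurable]: "F_PMF \<beta> Z m \<in> borel_measurable borel"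
proof (rule borel_measurable_continuous_onI)
  have "F_PMF \<beta> Z m = (\<lambda>z. (1 / (\<beta> * m z)) *\<^sub>R grad m z)"
    using F_PMF_eq[OF m_C1 m_pos] by (rule ext)
  then show "continuous_on UNIV (F_PMF \<beta> Z m)"
    using C1_fun_continuous_on[OF m_C1] m_C1 m_pos beta_pos unfolding C1_fun_def
    by (simp only:) (intro continuous_intros, auto simp: less_imp_neq[symmetric])
qed

lemma preimage_in_sets_gibbs: "A \<in> sets borel \<Longrightarrow> L -` A \<in> sets (gibbs \<beta> U)"
  using measurable_sets_borel[OF measurable_L] by (simp add: sets_gibbs)

lemma inner_integral_gibbs_preimage:
  fixes f :: "'a \<Rightarrow> 'c::euclidean_space"
  assumes f: "integrable (gibbs \<beta> U) f" and [measurable]: "A \<in> sets borel"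
  shows "(\<integral>x. indicator (L -` A) x *\<^sub>R f x \<partial>gibbs \<beta> U) \<bullet> b
       = (\<integral>x. indicator A (L x) * (pdf x * (f x \<bullet> b)) \<partial>lborel)"
proof -
  have [measurable]: "f \<in> borel_measurable borel"
    using borel_measurable_integrable[OF f] by (simp add: measurable_cong_sets[OF sets_gibbs refl])
  from integrable_mult_indicator[OF preimage_in_sets_gibbs[OF \<open>A \<in> sets borel\<close>] f]
  have "(\<integral>x. indicator (L -` A) x *\<^sub>R f x \<partial>gibbs \<beta> U) \<bullet> b
      = (\<integral>x. (indicator (L -` A) x *\<^sub>R f x) \<bullet> b \<partial>gibbs \<beta> U)"
    by (intro integral_inner_left[symmetric])
  also have "\<dots> = (\<integral>x. indicator A (L x) * (pdf x * (f x \<bullet> b)) \<partial>lborel)"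
    by (subst integral_gibbs) (auto simp: indicator_def ac_simps)
  finally show ?thesis .
qed

theorem cond_exp_given_F_PMF:
  fixes h :: "'a \<Rightarrow> 'b" and V :: "'b \<Rightarrow> 'a"
  assumes LV: "\<And>b. b \<in> Basis \<Longrightarrow> L (V b) = b"
    and hV: "\<And>x b. b \<in> Basis \<Longrightarrow> h x \<bullet> b = V b \<bullet> force U x"
    and h: "integrable (gibbs \<beta> U) h"
  shows "cond_exp_given (gibbs \<beta> U) L h (F_PMF \<beta> (partition_fn \<beta> U) m)"
proof -
  let ?F = "F_PMF \<beta> (partition_fn \<beta> U) m"
  have [measurable]: "h \<in> borel_measurable borel"
    using borel_measurable_integrable[OF h] by (simp add: measurable_cong_sets[OF sets_gibbs refl])
  have "integrable lborel (\<lambda>x. pdf x *\<^sub>R h x)" using h integrable_gibbs_iff[of h] by simp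
  then have "integrable lborel (\<lambda>x. (pdf x *\<^sub>R h x) \<bullet> b)" for b
    by (rule integrable_inner_left)
  then have "integrable lborel (\<lambda>x. pdf x * (V b \<bullet> force U x))" if "b \<in> Basis" for b
    by (simp add: hV[OF that, symmetric])
  note components = integral_indicator_grad_component[OF _ LV this]
  have "integrable lborel (\<lambda>z. \<Sum>b\<in>Basis. (grad m z \<bullet> b) *\<^sub>R b)"
    using components(1) by (intro Bochner_Integration.integrable_sum integrable_scaleR_left) auto
  then have F_integrable: "integrable (gibbs \<beta> U) (\<lambda>x. ?F (L x))"
    by (simp add: integrable_pushforward_iff m_scaleR_F_PMF euclidean_representation)
  have "(\<integral>x. indicator (L -` A) x *\<^sub>R h x \<partial>gibbs \<beta> U) = (\<integral>x. indicator (L -` A) x *\<^sub>R ?F (L x) \<partial>gibbs \<beta> U)"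
    if [measurable]: "A \<in> sets borel" for A
  proof (rule euclidean_eqI)
    fix b :: 'b assume b: "b \<in> Basis"
    have "(\<integral>x. indicator (L -` A) x *\<^sub>R ?F (L x) \<partial>gibbs \<beta> U) \<bullet> b
        = (\<integral>x. (\<lambda>z. indicator A z * (?F z \<bullet> b)) (L x) \<partial>gibbs \<beta> U)"
      using integrable_mult_indicator[OF preimage_in_sets_gibbs[OF that] F_integrable]
      by (subst integral_inner_left[symmetric]) (auto simp: indicator_def)
    also have "\<dots> = (\<integral>z. indicator A z * ((m z *\<^sub>R ?F z) \<bullet> b) \<partial>lborel)"
      by (subst integral_pushforward) (auto simp: mult.left_commute)
    also have "\<dots> = (1 / \<beta>) * (\<integral>z. indicator A z * (grad m z \<bullet> b) \<partial>lborel)"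
      by (simp add: m_scaleR_F_PMF mult.left_commute)
    also have "\<dots> = (\<integral>x. indicator A (L x) * (pdf x * (h x \<bullet> b)) \<partial>lborel)"
      using components(2)[OF b] beta_pos by (simp add: hV b)
    also have "\<dots> = (\<integral>x. indicator (L -` A) x *\<^sub>R h x \<partial>gibbs \<beta> U) \<bullet> b"
      by (rule inner_integral_gibbs_preimage[OF h, symmetric]) simp
    finally show "(\<integral>x. indicator (L -` A) x *\<^sub>R h x \<partial>gibbs \<beta> U) \<bullet> b
        = (\<integral>x. indicator (L -` A) x *\<^sub>R ?F (L x) \<partial>gibbs \<beta> U) \<bullet> b" ..
  qed
  then show ?thesis
    unfolding cond_exp_given_def using F_integrable by simp
qed

end

section \<open>Linear coarse-graining matrices\<close>

lemma inner_matrix_vector_transpose: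
  fixes A :: "real^'n^'m"
  shows "(A *v x) \<bullet> y = x \<bullet> (transpose A *v y)"
  by (metis dot_lmul_matrix inner_commute transpose_matrix_vector)

lemma matrix_inv_mult_left:
  fixes A :: "real^'n^'n"
  assumes "invertible A"
  shows "matrix_inv A ** A = mat 1"
  using someI_ex[OF assms[unfolded invertible_def]] unfolding matrix_inv_def by auto

lemma invertible_mult_transpose_if_full_row_rank:
  fixes T :: "real^'n^'m"
  assumes "rank T = CARD('m)"
  shows "invertible (T ** transpose T)"
proof -
  have surj: "surj ((*v) T)" using assms full_rank_surjective by blast
  have "inj ((*v) (T ** transpose T))"
  proof (rule injI)
    fix y z :: "real^'m"
    assume "(T ** transpose T) *v y = (T ** transpose T) *v z"
    then have "T *v (transpose T *v (y - z)) = 0"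
      by (simp add: matrix_vector_mult_diff_distrib matrix_vector_mul_assoc del: transpose_matrix_vector)
    then have "(transpose T *v (y - z)) \<bullet> (transpose T *v (y - z)) = 0"
      by (metis inner_matrix_vector_transpose inner_zero_left transpose_transpose inner_commute)
    then have kernel: "transpose T *v (y - z) = 0" by simp
    obtain x where "T *v x = y - z" using surj by (metis surjD)
    then have "(y - z) \<bullet> (y - z) = x \<bullet> (transpose T *v (y - z))"
      using inner_matrix_vector_transpose by metis
    then show "y = z" using kernel by simp
  qed
  then show ?thesis
    by (simp add: invertible_left_inverse matrix_left_invertible_injective)
qed

theorem cond_exp_given_F_PMF_linear:
  fixes \<beta> :: real and U :: "real^'n \<Rightarrow> real" and T W :: "real^'n^'m" and mubar :: "real^'m \<Rightarrow> real"
  assumes "\<beta> > 0" and "smooth_fun U" and "integrable lborel (\<lambda>x. exp (- \<beta> * U x))"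
    and "distr (gibbs \<beta> U) lborel (\<lambda>x. T *v x) = density lborel (\<lambda>z. ennreal (mubar z))"
    and "\<forall>z. mubar z > 0" and "C1_fun mubar"
    and invertible: "invertible (W ** transpose T)"
    and "integrable (gibbs \<beta> U) (\<lambda>x. matrix_inv (W ** transpose T) *v (W *v force U x))"
  shows "cond_exp_given (gibbs \<beta> U) (\<lambda>x. T *v x)
           (\<lambda>x. matrix_inv (W ** transpose T) *v (W *v force U x)) (F_PMF \<beta> (partition_fn \<beta> U) mubar)"
proof -
  interpret linear_coarse_graining \<beta> U "(*v) T" mubar
    by (rule linear_coarse_graining.intro) (use assms matrix_vector_mul_linear in auto)
  define G where "G = matrix_inv (W ** transpose T) ** W"
  have GT: "G ** transpose T = mat 1"
    unfolding G_def using matrix_inv_mult_left[OF invertible] by (simp add: matrix_mul_assoc)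
  have TG: "T ** transpose G = mat 1"
    using arg_cong[OF GT, of transpose] by (simp add: matrix_transpose_mul)
  show ?thesis
  proof (rule cond_exp_given_F_PMF[where V="\<lambda>b. transpose G *v b"])
    show "T *v (transpose G *v b) = b" for b
      by (simp add: matrix_vector_mul_assoc TG del: transpose_matrix_vector)
    show "(matrix_inv (W ** transpose T) *v (W *v force U x)) \<bullet> b = (transpose G *v b) \<bullet> force U x" for x b
      unfolding G_def matrix_vector_mul_assoc[symmetric]
      by (subst inner_matrix_vector_transpose) (simp add: matrix_vector_mul_assoc inner_commute)
  qed (use assms in auto)
qed

theorem corollary2:
  fixes \<beta> :: real
    and U :: "real^(('n::finite) \<times> 3) \<Rightarrow> real"
    and \<zeta> :: "real^'n^'m"
    and mubar :: "real^(('m::finite) \<times> 3) \<Rightarrow> real"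
  assumes beta_pos: "\<beta> > 0"
    and U_smooth: "smooth_fun U"
    and Z_finite: "integrable lborel (\<lambda>x. exp (- \<beta> * U x))"
    and rank_T: "rank (block_cg \<zeta>) = 3 * CARD('m)"
    and mubar_density: "distr (gibbs \<beta> U) lborel (\<lambda>x. block_cg \<zeta> *v x)
                          = density lborel (\<lambda>z. ennreal (mubar z))"
    and mubar_pos: "\<forall>z. mubar z > 0"
    and mubar_C1: "C1_fun mubar"
  shows "(\<forall>W :: real^('n \<times> 3)^('m \<times> 3).
            invertible (W ** transpose (block_cg \<zeta>)) \<longrightarrow>
            integrable (gibbs \<beta> U)
              (\<lambda>x. matrix_inv (W ** transpose (block_cg \<zeta>)) *v (W *v force U x)) \<longrightarrow>
            cond_exp_given (gibbs \<beta> U) (\<lambda>x. block_cg \<zeta> *v x)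
              (\<lambda>x. matrix_inv (W ** transpose (block_cg \<zeta>)) *v (W *v force U x))
              (F_PMF \<beta> (partition_fn \<beta> U) mubar))
       \<and> invertible (block_cg \<zeta> ** transpose (block_cg \<zeta>))
       \<and> (integrable (gibbs \<beta> U)
              (\<lambda>x. matrix_inv (block_cg \<zeta> ** transpose (block_cg \<zeta>)) *v (block_cg \<zeta> *v force U x)) \<longrightarrow>
            cond_exp_given (gibbs \<beta> U) (\<lambda>x. block_cg \<zeta> *v x)
              (\<lambda>x. matrix_inv (block_cg \<zeta> ** transpose (block_cg \<zeta>)) *v (block_cg \<zeta> *v force U x))
              (F_PMF \<beta> (partition_fn \<beta> U) mubar))"
proof -
  have "invertible (block_cg \<zeta> ** transpose (block_cg \<zeta>))"
    using rank_T by (intro invertible_mult_transpose_if_full_row_rank) simp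
  then show ?thesis
    using cond_exp_given_F_PMF_linear[OF beta_pos U_smooth Z_finite mubar_density mubar_pos mubar_C1]
    by blast
qed

end
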